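(* $21 \le R_3(L) \le 2593$. In particular, there exists a coloring of $[20]\times[20]$ with 3 colors containing no monochromatic $L$, i.e. no integers $i,j$ and $t\ge 1$ with $(i,j),(i,j+t),(i+t,j+t)\in[20]\times[20]$ all of the same color.
   Context: For $n\in\mathbb{N}$, $[n]=\{1,\dots,n\}$. An $L$ in the grid $[n]\times[n]$ is a set of three lattice points of the form $\{(i,j),(i,j+t),(i+t,j+t)\}$ with $t$ a positive integer. A $c$-coloring of the grid is a function $[n]\times[n]\to[c]$. $R_c(L)$ denotes the least $n$ such that every $c$-coloring of $[n]\times[n]$ contains a monochromatic $L$. *)

theory Defs
  imports Main
begin

definition is_coloring :: "nat \<Rightarrow> nat \<Rightarrow> (nat \<times> nat \<Rightarrow> nat) \<Rightarrow> bool" where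
  "is_coloring c n f \<longleftrightarrow> (\<forall>p \<in> {1..n} \<times> {1..n}. f p \<in> {1..c})"

definition has_mono_L :: "nat \<Rightarrow> (nat \<times> nat \<Rightarrow> nat) \<Rightarrow> bool" where
  "has_mono_L n f \<longleftrightarrow>
     (\<exists>i j t. t \<ge> 1 \<and> (i, j) \<in> {1..n} \<times> {1..n} \<and> (i, j + t) \<in> {1..n} \<times> {1..n}
        \<and> (i + t, j + t) \<in> {1..n} \<times> {1..n}
        \<and> f (i, j) = f (i, j + t) \<and> f (i, j + t) = f (i + t, j + t))"

definition R_L :: "nat \<Rightarrow> nat" where
  "R_L c = (LEAST n. \<forall>f. is_coloring c n f \<longrightarrow> has_mono_L n f)"

end

theory Submission
  imports Defs
begin

text \<open>Upper bound: colour the diagonal of [2593] x [2593]; some colour r occurs on a set R of at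
  least 865 diagonal points, and every point (a, b) with a < b in R avoids r. Pigeonholing the
  differences of pairs in R gives a shift \<delta> and 145 points a with a, a + \<delta> \<in> R; at least 73 of
  the points (a, a + \<delta>) share a second colour b, and then every (a, a' + \<delta>) with a < a' among them
  avoids both r and b. A last pigeonhole on differences inside these 73 points produces an L all
  of whose corners carry the third colour. Lower bound: an explicit L-free 3-colouring of
  [20] x [20], checked by the simplifier with a column-by-column scan of the table.\<close>

lemma pigeonhole_card_fiber:
  assumes "finite B" "g ` A \<subseteq> B" "k * card B < card A"
  obtains b where "b \<in> B" "k < card {a \<in> A. g a = b}"
proof -
  have "A = (\<Union>b\<in>B. {a \<in> A. g a = b})" using assms(2) by auto
  then have "card A \<le> (\<Sum>b\<in>B. card {a \<in> A. g a = b})"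
    using card_UN_le[OF assms(1)] by metis
  with assms(3) have "k * card B < (\<Sum>b\<in>B. card {a \<in> A. g a = b})" by linarith
  then have "\<not> (\<forall>b \<in> B. card {a \<in> A. g a = b} \<le> k)"
    using sum_bounded_above[of B "\<lambda>b. card {a \<in> A. g a = b}" k] by (auto simp: mult.commute)
  then show ?thesis using that by (auto simp: not_le)
qed

lemma card_ordered_pairs:
  fixes R :: "'a :: linorder set"
  assumes "finite R"
  shows "2 * card {(a, b). a \<in> R \<and> b \<in> R \<and> a < b} = card R * (card R - 1)"
proof -
  define P where "P = {(a, b). a \<in> R \<and> b \<in> R \<and> a < b}"
  have "P \<subseteq> R \<times> R" by (auto simp: P_def)
  then have "finite P" using assms finite_subset by blast
  have split: "R \<times> R = P \<union> prod.swap ` P \<union> (\<lambda>a. (a, a)) ` R"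
    by (auto simp: P_def image_iff)
  have "P \<inter> prod.swap ` P = {}" "(P \<union> prod.swap ` P) \<inter> (\<lambda>a. (a, a)) ` R = {}"
    by (auto simp: P_def)
  moreover have "card (prod.swap ` P) = card P" by (simp add: card_image)
  ultimately have "card (R \<times> R) = card P + card P + card R"
    unfolding split using \<open>finite P\<close> assms
    by (simp add: card_Un_disjoint card_image inj_on_def)
  then show ?thesis by (simp add: P_def card_cartesian_product algebra_simps diff_mult_distrib2)
qed

lemma many_pairs_with_equal_difference:
  fixes R :: "nat set"
  assumes "R \<subseteq> {1..n}" "2 * k * (n - 1) < card R * (card R - 1)"
  obtains d where "1 \<le> d" "k < card {a \<in> R. a + d \<in> R}"
proof -
  define P where "P = {(a, b). a \<in> R \<and> b \<in> R \<and> a < b}"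
  have "finite R" using assms(1) finite_subset by blast
  have "k * card {1..n - 1} < card P"
    using assms(2) card_ordered_pairs[OF \<open>finite R\<close>] by (simp add: P_def)
  moreover have "b - a \<in> {1..n - 1}" if "a \<in> R" "b \<in> R" "a < b" for a b
  proof -
    have "1 \<le> a" "b \<le> n" using that(1,2) assms(1) by auto
    then show ?thesis using that(3) by auto
  qed
  then have "(\<lambda>(a, b). b - a) ` P \<subseteq> {1..n - 1}" by (auto simp: P_def)
  ultimately obtain d where d: "d \<in> {1..n - 1}" "k < card {p \<in> P. (\<lambda>(a, b). b - a) p = d}"
    using pigeonhole_card_fiber[of "{1..n - 1}"] by blast
  have "{p \<in> P. (\<lambda>(a, b). b - a) p = d} = (\<lambda>a. (a, a + d)) ` {a \<in> R. a + d \<in> R}"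
    using d(1) by (force simp: P_def image_iff)
  then have "card {p \<in> P. (\<lambda>(a, b). b - a) p = d} = card {a \<in> R. a + d \<in> R}"
    by (simp add: card_image inj_on_def)
  then show ?thesis using that d by auto
qed

lemma two_elements_with_equal_difference:
  fixes S :: "nat set"
  assumes "S \<subseteq> {1..n}" "2 * (n - 1) < card S * (card S - 1)"
  obtains x z d where "x < z" "1 \<le> d" "x \<in> S" "z \<in> S" "x + d \<in> S" "z + d \<in> S"
proof -
  obtain d where "1 \<le> d" and two: "1 < card {a \<in> S. a + d \<in> S}"
    using many_pairs_with_equal_difference[of S n 1] assms by auto
  have "finite S" using assms(1) by (rule finite_subset) simp
  then have "\<not> (\<forall>x \<in> {a \<in> S. a + d \<in> S}. \<forall>z \<in> {a \<in> S. a + d \<in> S}. x = z)"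
    using two card_le_Suc0_iff_eq[of "{a \<in> S. a + d \<in> S}"] by simp
  then obtain x z where "x \<in> {a \<in> S. a + d \<in> S}" "z \<in> {a \<in> S. a + d \<in> S}" "x \<noteq> z"
    by blast
  then show ?thesis using that[of x z d] that[of z x d] \<open>1 \<le> d\<close> by (auto simp: neq_iff)
qed

lemma unique_third_color:
  fixes u v r b :: nat
  assumes "u \<in> {1..3} - {r, b}" "v \<in> {1..3} - {r, b}" "r \<in> {1..3}" "b \<in> {1..3}" "r \<noteq> b"
  shows "u = v"
  using assms by auto

lemma has_mono_L_shifted_diagonal:
  assumes "1 \<le> a" "a < a'" "a' + e \<le> n"
    and "f (a, a + e) = f (a, a' + e)" "f (a, a' + e) = f (a', a' + e)"
  shows "has_mono_L n f"
proof -
  have "1 \<le> a' - a \<and> (a, a + e) \<in> {1..n} \<times> {1..n}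
      \<and> (a, a + e + (a' - a)) \<in> {1..n} \<times> {1..n} \<and> (a + (a' - a), a + e + (a' - a)) \<in> {1..n} \<times> {1..n}
      \<and> f (a, a + e) = f (a, a + e + (a' - a)) \<and> f (a, a + e + (a' - a)) = f (a + (a' - a), a + e + (a' - a))"
    using assms by (auto simp: ac_simps)
  then show ?thesis unfolding has_mono_L_def by blast
qed

lemma L_free_avoids_shifted_diagonal_color:
  assumes "\<not> has_mono_L n f" "A \<subseteq> {1..n}" "\<forall>x \<in> A. f (x, x + e) = c"
    and "a \<in> A" "a' \<in> A" "a < a'" "a' + e \<le> n"
  shows "f (a, a' + e) \<noteq> c"
  using assms has_mono_L_shifted_diagonal[of a a' e n f] by auto

lemma L_free_two_diagonal_colors_card_bound:
  assumes L_free: "\<not> has_mono_L n f" and "is_coloring 3 n f"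
    and R: "R \<subseteq> {1..n}" "\<forall>x \<in> R. f (x, x) = r"
    and S: "S \<subseteq> R" "\<forall>a \<in> S. a + \<delta> \<in> R \<and> f (a, a + \<delta>) = b"
    and colors_rb: "r \<in> {1..3}" "b \<in> {1..3}" "r \<noteq> b"
  shows "card S * (card S - 1) \<le> 2 * (n - 1)"
proof (rule ccontr)
  assume large: "\<not> ?thesis"
  have R_range: "x \<in> {1..n}" if "x \<in> R" for x using R(1) that by blast
  have S_sub: "S \<subseteq> {1..n}" using S(1) R(1) by blast
  have third_color: "f (a, a' + \<delta>) \<in> {1..3} - {r, b}" if "a \<in> S" "a' \<in> S" "a < a'" for a a'
  proof -
    have "a \<in> R" "a' + \<delta> \<in> R" using S that by auto
    then have "f (a, a' + \<delta>) \<in> {1..3}" using \<open>is_coloring 3 n f\<close> R_range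
      by (auto simp: is_coloring_def)
    moreover have "f (a, a' + \<delta>) \<noteq> r"
      using L_free_avoids_shifted_diagonal_color[OF L_free R(1), of 0 r a "a' + \<delta>"]
        \<open>a \<in> R\<close> \<open>a' + \<delta> \<in> R\<close> R(2) R_range that(3) by auto
    moreover have "f (a, a' + \<delta>) \<noteq> b"
      using L_free_avoids_shifted_diagonal_color[OF L_free S_sub, of \<delta> b a a']
        \<open>a' + \<delta> \<in> R\<close> R_range S(2) that by auto
    ultimately show ?thesis by auto
  qed
  obtain x z d where xz: "x < z" "1 \<le> d" "x \<in> S" "z \<in> S" "x + d \<in> S" "z + d \<in> S"
    using two_elements_with_equal_difference[OF S_sub] large by (auto simp: not_le)
  have "1 \<le> x" "z + d + \<delta> \<le> n" using R_range S xz by force+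
  have "f (x, x + d + \<delta>) \<in> {1..3} - {r, b}" "f (x, z + d + \<delta>) \<in> {1..3} - {r, b}"
      "f (z, z + d + \<delta>) \<in> {1..3} - {r, b}"
    using third_color[of x "x + d"] third_color[of x "z + d"] third_color[of z "z + d"] xz
    by (simp_all add: add.assoc)
  then have "f (x, x + d + \<delta>) = f (x, z + d + \<delta>)" "f (x, z + d + \<delta>) = f (z, z + d + \<delta>)"
    using unique_third_color colors_rb by metis+
  then have "has_mono_L n f"
    using has_mono_L_shifted_diagonal[of x z "d + \<delta>" n f] \<open>1 \<le> x\<close> \<open>z + d + \<delta> \<le> n\<close> xz(1)
    by (simp add: add.assoc)
  with L_free show False by contradiction
qed

theorem has_mono_L_3_2593:
  assumes "is_coloring 3 2593 f"
  shows "has_mono_L 2593 f"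
proof (rule ccontr)
  define n :: nat where "n = 2593"
  assume "\<not> has_mono_L 2593 f"
  then have L_free: "\<not> has_mono_L n f" by (simp add: n_def)
  have colors: "f (i, j) \<in> {1..3}" if "i \<in> {1..n}" "j \<in> {1..n}" for i j
    using assms that by (auto simp: is_coloring_def n_def)
  have "(\<lambda>i. f (i, i)) ` {1..n} \<subseteq> {1..3}" using colors by auto
  moreover have "864 * card {1..3::nat} < card {1..n}" by (simp add: n_def)
  ultimately obtain r where r: "r \<in> {1..3}" and R_large: "864 < card {i \<in> {1..n}. f (i, i) = r}"
    using pigeonhole_card_fiber[of "{1..3}" "\<lambda>i. f (i, i)" "{1..n}" 864] by blast
  define R where "R = {i \<in> {1..n}. f (i, i) = r}"
  have R: "R \<subseteq> {1..n}" "\<forall>x \<in> R. f (x, x + 0) = r" by (auto simp: R_def)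
  have "865 * 864 \<le> card R * (card R - 1)"
    using R_large by (intro mult_le_mono) (auto simp: R_def)
  then obtain \<delta> where "1 \<le> \<delta>" and S_large: "144 < card {a \<in> R. a + \<delta> \<in> R}"
    using many_pairs_with_equal_difference[OF R(1), of 144] by (auto simp: n_def)
  define S where "S = {a \<in> R. a + \<delta> \<in> R}"
  have "f (a, a + \<delta>) \<in> {1..3} - {r}" if "a \<in> S" for a
  proof -
    have "a \<in> R" "a + \<delta> \<in> R" using that by (auto simp: S_def)
    moreover from this have "a \<in> {1..n}" "a + \<delta> \<in> {1..n}" using R(1) by blast+
    ultimately show ?thesis
      using colors L_free_avoids_shifted_diagonal_color[OF L_free R, of a "a + \<delta>"] \<open>1 \<le> \<delta>\<close>
      by auto
  qed
  then have "(\<lambda>a. f (a, a + \<delta>)) ` S \<subseteq> {1..3} - {r}" by auto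
  moreover have "72 * card ({1..3} - {r}) < card S" using S_large r by (simp add: S_def)
  ultimately obtain b where b: "b \<in> {1..3} - {r}" and S'_large: "72 < card {a \<in> S. f (a, a + \<delta>) = b}"
    using pigeonhole_card_fiber[of "{1..3} - {r}" "\<lambda>a. f (a, a + \<delta>)" S 72] by blast
  define S' where "S' = {a \<in> S. f (a, a + \<delta>) = b}"
  have "73 * 72 \<le> card S' * (card S' - 1)"
    using S'_large by (intro mult_le_mono) (auto simp: S'_def)
  moreover have "card S' * (card S' - 1) \<le> 2 * (n - 1)"
  proof (rule L_free_two_diagonal_colors_card_bound[OF L_free _ R(1)])
    show "is_coloring 3 n f" using assms by (simp add: n_def)
    show "\<forall>x \<in> R. f (x, x) = r" "S' \<subseteq> R" "\<forall>a \<in> S'. a + \<delta> \<in> R \<and> f (a, a + \<delta>) = b"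
      by (auto simp: R_def S_def S'_def)
  qed (use r b in auto)
  ultimately show False by (simp add: n_def)
qed

definition table_coloring :: "nat list list \<Rightarrow> nat \<times> nat \<Rightarrow> nat" where
  "table_coloring T = (\<lambda>(i, j). T ! (i - 1) ! (j - 1))"

fun no_common_pair :: "nat \<Rightarrow> nat list \<Rightarrow> nat list \<Rightarrow> bool" where
  "no_common_pair c (x # xs) (y # ys) = ((x \<noteq> c \<or> y \<noteq> c) \<and> no_common_pair c xs ys)"
| "no_common_pair c _ _ = True"

text \<open>Walking along a row, lefts holds the entries already passed (nearest first) and the heads
  of the lower rows form the current column, so an L is an index t with both t-th entries equal to
  the current entry.\<close>

fun row_L_free :: "nat list \<Rightarrow> nat list \<Rightarrow> nat list list \<Rightarrow> bool" where
  "row_L_free lefts [] rows = True"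
| "row_L_free lefts (c # cs) rows =
     (no_common_pair c lefts (map hd rows) \<and> row_L_free (c # lefts) cs (map tl rows))"

fun table_L_free :: "nat list list \<Rightarrow> bool" where
  "table_L_free [] = True"
| "table_L_free (row # rows) = (row_L_free [] row rows \<and> table_L_free rows)"

lemma no_common_pair_nth:
  "no_common_pair c xs ys \<Longrightarrow> t < length xs \<Longrightarrow> t < length ys \<Longrightarrow> xs ! t = c \<Longrightarrow> ys ! t \<noteq> c"
  by (induction c xs ys arbitrary: t rule: no_common_pair.induct) (auto simp: nth_Cons split: nat.splits)

lemma row_L_free_nth:
  assumes "row_L_free lefts row rows" "\<forall>r \<in> set rows. length r = length row" "k < length row"
  shows "no_common_pair (row ! k) (rev (take k row) @ lefts) (map (\<lambda>r. r ! k) rows)"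
  using assms
proof (induction lefts row rows arbitrary: k rule: row_L_free.induct)
  case (2 lefts c cs rows)
  have nonempty: "\<forall>r \<in> set rows. r \<noteq> []" using "2.prems"(2) by auto
  show ?case
  proof (cases k)
    case 0
    have column: "map (\<lambda>r. r ! 0) rows = map hd rows" using nonempty by (auto simp: hd_conv_nth)
    show ?thesis using "2.prems"(1) unfolding 0 column by simp
  next
    case (Suc k')
    have "tl r ! k' = r ! k" if "r \<in> set rows" for r using nonempty that Suc by (cases r) auto
    then have column: "map (\<lambda>r. r ! k') (map tl rows) = map (\<lambda>r. r ! k) rows" by simp
    have "no_common_pair (cs ! k') (rev (take k' cs) @ c # lefts) (map (\<lambda>r. r ! k') (map tl rows))"
      using "2.IH"[of k'] "2.prems" Suc by simp
    then show ?thesis unfolding column using Suc by simp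
  qed
qed simp

lemma table_L_free_nth:
  "table_L_free T \<Longrightarrow> i < length T \<Longrightarrow> row_L_free [] (T ! i) (drop (Suc i) T)"
  by (induction T arbitrary: i) (auto simp: nth_Cons split: nat.splits)

lemma table_coloring_is_coloring:
  assumes "length T = n" "\<forall>row \<in> set T. length row = n \<and> set row \<subseteq> {1..c}"
  shows "is_coloring c n (table_coloring T)"
  unfolding is_coloring_def
proof (intro ballI, clarify)
  fix i j assume "i \<in> {1..n}" "j \<in> {1..n}"
  then have "T ! (i - 1) \<in> set T" using assms(1) by auto
  then have "length (T ! (i - 1)) = n" and entries: "set (T ! (i - 1)) \<subseteq> {1..c}"
    using assms(2) by auto
  then have "T ! (i - 1) ! (j - 1) \<in> set (T ! (i - 1))" using \<open>j \<in> {1..n}\<close> by auto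
  then show "table_coloring T (i, j) \<in> {1..c}"
    using entries by (auto simp: table_coloring_def)
qed

lemma table_coloring_L_free:
  assumes "table_L_free T" "length T = n" "\<forall>row \<in> set T. length row = n"
  shows "\<not> has_mono_L n (table_coloring T)"
proof
  assume "has_mono_L n (table_coloring T)"
  then obtain i j t where ijt: "1 \<le> t" "1 \<le> i" "1 \<le> j" "i + t \<le> n" "j + t \<le> n"
    and eq: "table_coloring T (i, j) = table_coloring T (i, j + t)"
      "table_coloring T (i, j + t) = table_coloring T (i + t, j + t)"
    unfolding has_mono_L_def by auto
  define row where "row = T ! (i - 1)"
  define k where "k = j + t - 1"
  have "length row = n" using assms ijt by (simp add: row_def)
  moreover have "row_L_free [] row (drop i T)"
    using table_L_free_nth[OF assms(1), of "i - 1"] assms(2) ijt by (simp add: row_def)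
  moreover have "\<forall>r \<in> set (drop i T). length r = length row"
    using assms(3) \<open>length row = n\<close> by (auto dest: in_set_dropD)
  ultimately have no_pair: "no_common_pair (row ! k) (rev (take k row)) (map (\<lambda>r. r ! k) (drop i T))"
    using row_L_free_nth[of "[]" row "drop i T" k] ijt by (simp add: k_def)
  have left: "rev (take k row) ! (t - 1) = row ! (j - 1)"
    using ijt \<open>length row = n\<close> by (simp add: k_def rev_nth)
  have below: "map (\<lambda>r. r ! k) (drop i T) ! (t - 1) = T ! (i + t - 1) ! k"
  proof -
    have "i + (t - 1) = i + t - 1" using ijt by simp
    then show ?thesis using ijt assms(2) by (simp add: nth_drop)
  qed
  have "row ! (j - 1) = row ! k" "T ! (i + t - 1) ! k = row ! k"
    using eq by (simp_all add: table_coloring_def row_def k_def)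
  moreover have "t - 1 < length (rev (take k row))" "t - 1 < length (map (\<lambda>r. r ! k) (drop i T))"
    using ijt assms(2) \<open>length row = n\<close> by (auto simp: k_def)
  ultimately show False using no_common_pair_nth[OF no_pair] left below by simp
qed

definition L_free_table_20 :: "nat list list" where
  "L_free_table_20 = [[2,3,1,2,3,1,1,3,1,2,1,1,2,3,1,2,2,3,3,3],
  [1,1,2,3,1,2,3,3,2,3,1,2,3,1,2,3,3,1,1,1],
  [2,3,3,1,2,3,1,2,3,1,2,3,1,2,3,1,1,2,3,2],
  [1,3,1,1,1,2,3,1,2,2,2,3,1,2,3,1,3,1,2,3],
  [1,1,2,3,2,1,2,3,1,1,3,3,1,2,3,2,1,2,3,3],
  [1,3,3,1,2,2,3,1,1,3,3,2,2,3,1,2,2,3,1,1],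
  [3,2,2,2,3,1,1,2,3,3,2,2,1,1,2,3,3,1,2,2],
  [2,2,1,1,3,2,3,2,3,1,2,3,2,3,1,2,1,2,3,3],
  [1,1,1,3,3,3,1,2,2,2,3,1,2,1,2,3,2,3,1,1],
  [1,3,2,3,2,2,2,3,1,1,1,2,3,1,3,1,3,1,2,2],
  [2,2,3,2,1,1,1,3,2,3,3,1,2,2,1,1,1,2,3,3],
  [1,1,3,2,1,3,3,1,2,1,2,1,3,1,2,3,2,2,1,1],
  [2,2,3,1,3,1,2,3,3,2,3,1,3,2,2,1,3,1,1,2],
  [2,3,2,1,3,3,3,1,2,2,1,2,3,3,3,1,1,2,3,1],
  [3,2,1,2,2,2,2,3,2,3,1,1,1,2,1,2,2,3,1,3],
  [1,3,1,3,3,3,1,2,1,1,1,3,2,3,1,3,3,1,2,1],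
  [2,1,2,1,2,1,3,1,1,2,3,3,2,1,2,3,1,2,3,2],
  [3,1,2,2,1,2,1,2,3,1,3,2,2,2,3,1,1,3,1,3],
  [2,1,1,3,1,3,1,2,1,2,1,3,1,1,3,2,2,3,2,1],
  [2,3,2,3,3,1,3,3,3,3,2,2,1,3,3,2,3,1,2,2]]"

lemma L_free_table_20:
  "table_L_free L_free_table_20" "length L_free_table_20 = 20"
  "\<forall>row \<in> set L_free_table_20. length row = 20 \<and> set row \<subseteq> {1..3}"
  by (simp_all add: L_free_table_20_def)

lemma has_mono_L_mono: "has_mono_L m f \<Longrightarrow> m \<le> n \<Longrightarrow> has_mono_L n f"
  unfolding has_mono_L_def by fastforce

lemma is_coloring_mono: "is_coloring c n f \<Longrightarrow> m \<le> n \<Longrightarrow> is_coloring c m f"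
  unfolding is_coloring_def by auto

lemma R_L_bounds:
  assumes "\<forall>f. is_coloring c N f \<longrightarrow> has_mono_L N f"
    and "is_coloring c M g" "\<not> has_mono_L M g"
  shows "M < R_L c" "R_L c \<le> N"
proof -
  let ?forced = "\<lambda>n. \<forall>f. is_coloring c n f \<longrightarrow> has_mono_L n f"
  show "R_L c \<le> N" unfolding R_L_def using assms(1) by (rule Least_le)
  have "?forced (R_L c)" unfolding R_L_def using assms(1) by (rule LeastI)
  then show "M < R_L c"
    using assms(2,3) is_coloring_mono[of c M g] has_mono_L_mono[of _ g M] by (meson not_less)
qed

theorem theorem3p1:
  shows "21 \<le> R_L 3 \<and> R_L 3 \<le> 2593 \<and> (\<exists>f. is_coloring 3 20 f \<and> \<not> has_mono_L 20 f)"
proof -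
  let ?f = "table_coloring L_free_table_20"
  have "is_coloring 3 20 ?f" using table_coloring_is_coloring L_free_table_20 by blast
  moreover have "\<not> has_mono_L 20 ?f" using table_coloring_L_free L_free_table_20 by blast
  ultimately show ?thesis
    using R_L_bounds[of 3 2593 20 ?f] has_mono_L_3_2593 by (auto simp: Suc_le_eq)
qed

end
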